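(* Let $d\ge1$ and let $h_1<h_2<\dots$ be a strictly increasing sequence of integers with $h_1\ge2$. Suppose that $L_d(h_1,h_2,\dots)$ and $L_d(h_1-1,h_2-1,h_3-1,\dots)$ are perfect lattices of minimum $4$, and that $L_{d+1}(h_1,h_2,\dots)\subset\mathbb Z^{d+3}$ contains a vector of norm $4$ whose first and last coordinates are both equal to $1$. Then $L_{d+1}(h_1,h_2,\dots)$ is perfect.
   Context: For a strictly increasing (finite or infinite, possibly empty) sequence of positive integers $h_1<h_2<\dots$ (called holes) and an integer $d\ge1$, let $s_1<s_2<\dots<s_{d+2}$ be the $d+2$ smallest elements of $\{1,2,3,\dots\}\setminus\{h_1,h_2,\dots\}$, and define $L_d(h_1,h_2,\dots)=\{x\in\mathbb Z^{d+2}:\ \sum_{i=1}^{d+2}x_i=0,\ \sum_{i=1}^{d+2}s_ix_i=0\}$ with the standard inner product of $\mathbb R^{d+2}$; it is an even integral lattice of rank $d$ with no vectors of norm $2$. Norm means squared Euclidean length; the minimum is the smallest norm of a nonzero element. A lattice $L$ of rank $n$ is perfect if $\{v\otimes v\}$, $v$ ranging over its minimal vectors, spans the $\binom{n+1}{2}$-dimensional space of symmetric tensors in $(L\otimes\mathbb R)\otimes(L\otimes\mathbb R)$. *)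

theory Defs
  imports Complex_Main "HOL-Library.Infinite_Set"
begin

text \<open>Holes: a strictly increasing (finite or infinite, possibly empty) sequence of
positive integers is represented by its set of values H (a set of positive naturals).
Vectors of Z^k are represented as functions nat => int supported on indices 0..k-1
(coordinate x_i of the paper is x (i-1)).\<close>

definition nonholes :: "nat set \<Rightarrow> nat set" where
  "nonholes H = {n. 1 \<le> n \<and> n \<notin> H}"

text \<open>s H i = the (i+1)-th smallest non-hole (0-indexed), i.e. s_{i+1} of the paper.\<close>
definition s :: "nat set \<Rightarrow> nat \<Rightarrow> nat" where
  "s H i = (if finite (nonholes H) then sorted_list_of_set (nonholes H) ! i
            else enumerate (nonholes H) i)"

definition enough_nonholes :: "nat \<Rightarrow> nat set \<Rightarrow> bool" where
  "enough_nonholes m H \<longleftrightarrow> infinite (nonholes H) \<or> m \<le> card (nonholes H)"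

definition L :: "nat \<Rightarrow> nat set \<Rightarrow> (nat \<Rightarrow> int) set" where
  "L d H = {x. (\<forall>i\<ge>d+2. x i = 0) \<and> (\<Sum>i<d+2. x i) = 0
                \<and> (\<Sum>i<d+2. int (s H i) * x i) = 0}"

definition sqnorm :: "nat \<Rightarrow> (nat \<Rightarrow> int) \<Rightarrow> int" where
  "sqnorm k x = (\<Sum>i<k. (x i)^2)"

definition has_minimum :: "nat \<Rightarrow> (nat \<Rightarrow> int) set \<Rightarrow> int \<Rightarrow> bool" where
  "has_minimum k \<Lambda> m \<longleftrightarrow> (\<exists>v\<in>\<Lambda>. v \<noteq> (\<lambda>_. 0) \<and> sqnorm k v = m)
      \<and> (\<forall>w\<in>\<Lambda>. w \<noteq> (\<lambda>_. 0) \<longrightarrow> m \<le> sqnorm k w)"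

definition min_vecs :: "nat \<Rightarrow> (nat \<Rightarrow> int) set \<Rightarrow> (nat \<Rightarrow> int) set" where
  "min_vecs k \<Lambda> = {v\<in>\<Lambda>. v \<noteq> (\<lambda>_. 0) \<and> (\<forall>w\<in>\<Lambda>. w \<noteq> (\<lambda>_. 0) \<longrightarrow> sqnorm k v \<le> sqnorm k w)}"

definition real_span :: "(nat \<Rightarrow> int) set \<Rightarrow> (nat \<Rightarrow> real) set" where
  "real_span \<Lambda> = {y. \<exists>S c. finite S \<and> S \<subseteq> \<Lambda> \<and>
        y = (\<lambda>i. \<Sum>v\<in>S. c v * real_of_int (v i))}"

text \<open>Symmetric tensors in V \<otimes> V, V = L \<otimes> R, realised as symmetric matrices
(functions nat => nat => real) all of whose rows lie in V.\<close>
definition sym_tensors :: "(nat \<Rightarrow> int) set \<Rightarrow> (nat \<Rightarrow> nat \<Rightarrow> real) set" where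
  "sym_tensors \<Lambda> = {M. (\<forall>i j. M i j = M j i) \<and> (\<forall>i. M i \<in> real_span \<Lambda>)}"

definition tensor_span :: "(nat \<Rightarrow> int) set \<Rightarrow> (nat \<Rightarrow> nat \<Rightarrow> real) set" where
  "tensor_span S0 = {M. \<exists>S c. finite S \<and> S \<subseteq> S0 \<and>
        M = (\<lambda>i j. \<Sum>v\<in>S. c v * real_of_int (v i) * real_of_int (v j))}"

definition perfect :: "nat \<Rightarrow> (nat \<Rightarrow> int) set \<Rightarrow> bool" where
  "perfect k \<Lambda> \<longleftrightarrow> tensor_span (min_vecs k \<Lambda>) = sym_tensors \<Lambda>"

end

theory Submission
  imports Defs "HOL-Library.Function_Algebras"
begin

(* Write \<Lambda> = L_{d+1}(h) in Z^{d+3}. Every nonzero vector of any L_n has norm at least 4: its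
   norm is even because its coordinates sum to 0, and a vector of norm 2 would be e_i - e_j,
   forcing s_i = s_j. The vectors of \<Lambda> with last coordinate 0 form L_d(h); those with first
   coordinate 0 form L_d(h - 1) shifted by one place, since the non-holes of h other than 1 are
   those of h - 1 shifted up by one. So the minimal vectors of both sublattices are minimal in
   \<Lambda>, and by perfection every symmetric tensor of either coordinate hyperplane lies in the span
   of the v \<otimes> v. Given x \<in> \<Lambda> with x_1 = x_{d+3} = 1 and a \<in> \<Lambda> \<otimes> R with a_1 = 0,
   a_{d+3} = 1, put b = x - a. A symmetric tensor M then equals
     (M - a \<otimes> r - r \<otimes> a + m a \<otimes> a - c b \<otimes> b) + (a \<otimes> u + u \<otimes> a - (m + c) a \<otimes> a) + c x \<otimes> x,
   where r is the last row of M, m = M_{d+3,d+3}, c = M_{d+3,1} and u = r - c b. The first summand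
   has vanishing last column, the second vanishing first column, and since subtracting multiples
   of x projects \<Lambda> \<otimes> R onto either coordinate hyperplane, they are symmetric tensors of the two
   sublattices. *)

section \<open>Enumerating the non-holes\<close>

lemma sorted_list_of_set_eq_map_enumerate:
  fixes S :: "'a::wellorder set"
  assumes "finite S"
  shows "sorted_list_of_set S = map (enumerate S) [0..<card S]"
proof (rule sorted_list_of_set_unique[THEN iffD1, OF assms], intro conjI)
  show "sorted_wrt (<) (map (enumerate S) [0..<card S])"
    using finite_enumerate_mono[OF _ assms] by (auto simp: sorted_wrt_iff_nth_less)
  show "set (map (enumerate S) [0..<card S]) = S"
    using bij_betw_imp_surj_on[OF finite_bij_enumerate[OF assms]] by (simp add: atLeast0LessThan)
qed simp

lemma Least_strict_mono_image:
  fixes f :: "'a::wellorder \<Rightarrow> 'b::wellorder"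
  assumes "strict_mono f" "a \<in> A"
  shows "(LEAST y. y \<in> f ` A) = f (LEAST x. x \<in> A)"
proof (rule Least_equality)
  show "f (LEAST x. x \<in> A) \<in> f ` A" using \<open>a \<in> A\<close> by (intro imageI LeastI)
  show "f (LEAST x. x \<in> A) \<le> y" if "y \<in> f ` A" for y
    using that strict_mono_less_eq[OF assms(1)] by (auto intro: Least_le)
qed

lemma enumerate_strict_mono_image:
  fixes f :: "'a::wellorder \<Rightarrow> 'b::wellorder"
  assumes "strict_mono f" "infinite A \<or> n < card A"
  shows "enumerate (f ` A) n = f (enumerate A n)"
  using assms(2)
proof (induction n arbitrary: A)
  case 0
  then obtain a where "a \<in> A" by fastforce
  then show ?case by (simp add: enumerate_0 Least_strict_mono_image[OF assms(1)])
next
  case (Suc n)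
  then obtain a where a: "a \<in> A" by fastforce
  then have a0: "enumerate A 0 \<in> A"
    unfolding enumerate_0 by (rule LeastI)
  have fa0: "enumerate (f ` A) 0 = f (enumerate A 0)"
    using a by (simp add: enumerate_0 Least_strict_mono_image[OF assms(1)])
  have "f ` A - {f (enumerate A 0)} = f ` (A - {enumerate A 0})"
    using strict_mono_imp_inj_on[OF assms(1)] by (auto simp: inj_on_def)
  moreover have "infinite (A - {enumerate A 0}) \<or> n < card (A - {enumerate A 0})"
    using Suc.prems a0 by auto
  ultimately show ?case
    by (simp only: enumerate_Suc' fa0 Suc.IH)
qed

lemma s_eq_enumerate:
  assumes "enough_nonholes m H" "i < m"
  shows "s H i = enumerate (nonholes H) i"
  using assms by (auto simp: s_def enough_nonholes_def sorted_list_of_set_eq_map_enumerate)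

lemma s_strict_mono:
  assumes "enough_nonholes m H" "i < j" "j < m"
  shows "s H i < s H j"
proof (cases "finite (nonholes H)")
  case True
  then show ?thesis
    using assms by (simp add: s_eq_enumerate finite_enumerate_mono enough_nonholes_def)
next
  case False
  then show ?thesis
    using assms by (simp add: s_eq_enumerate enumerate_mono)
qed

lemma nonholes_image_pred:
  assumes "\<forall>h\<in>H. 2 \<le> h"
  shows "nonholes H = insert 1 (Suc ` nonholes ((\<lambda>h. h - 1) ` H))"
proof (intro set_eqI)
  have "Suc m \<in> H \<longleftrightarrow> m \<in> (\<lambda>h. h - 1) ` H" for m
    using assms by (force simp: image_iff)
  moreover have "1 \<notin> H"
    using assms by auto
  ultimately show "n \<in> nonholes H \<longleftrightarrow> n \<in> insert 1 (Suc ` nonholes ((\<lambda>h. h - 1) ` H))" for n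
    by (cases n) (auto simp: nonholes_def inj_image_mem_iff)
qed

lemma s_Suc_image_pred:
  assumes H2: "\<forall>h\<in>H. 2 \<le> h" and en: "enough_nonholes (Suc m) H" and "i < m"
  shows "s H (Suc i) = Suc (s ((\<lambda>h. h - 1) ` H) i)"
proof -
  define N' where "N' = nonholes ((\<lambda>h. h - 1) ` H)"
  have N: "nonholes H = insert 1 (Suc ` N')"
    unfolding N'_def by (rule nonholes_image_pred[OF H2])
  have "1 \<notin> Suc ` N'" by (auto simp: N'_def nonholes_def)
  then have "finite N' \<Longrightarrow> card (nonholes H) = Suc (card N')"
    by (simp add: N card_image)
  then have en': "infinite N' \<or> m \<le> card N'"
    using en by (auto simp: enough_nonholes_def N finite_image_iff)
  have "enumerate (nonholes H) 0 = 1"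
    unfolding N enumerate_0 by (rule Least_equality) auto
  then have "s H (Suc i) = enumerate (Suc ` N') i"
    using en \<open>i < m\<close> \<open>1 \<notin> Suc ` N'\<close> by (simp add: s_eq_enumerate enumerate_Suc' N)
  also have "\<dots> = Suc (enumerate N' i)"
    using en' \<open>i < m\<close> by (intro enumerate_strict_mono_image) (auto simp: strict_mono_Suc_iff)
  also have "\<dots> = Suc (s ((\<lambda>h. h - 1) ` H) i)"
    using en' \<open>i < m\<close> unfolding N'_def by (subst s_eq_enumerate) (auto simp: enough_nonholes_def)
  finally show ?thesis .
qed


section \<open>Coordinate sublattices of L\<close>

lemma L_diff_mult_mem:
  assumes "v \<in> L k H" "x \<in> L k H"
  shows "(\<lambda>i. v i - c * x i) \<in> L k H"
  using assms by (simp add: L_def sum_subtractf right_diff_distrib mult.left_commute[of "int _"]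
      flip: sum_distrib_left del: sum.lessThan_Suc)

lemma L_eq_last_coord_zero: "L d H = {w \<in> L (d + 1) H. w (d + 2) = 0}"
proof -
  have "(\<forall>i\<ge>d + 2. w i = 0) \<longleftrightarrow> (\<forall>i\<ge>d + 1 + 2. w i = 0) \<and> w (d + 2) = 0" for w :: "nat \<Rightarrow> int"
  proof
    assume "(\<forall>i\<ge>d + 1 + 2. w i = 0) \<and> w (d + 2) = 0"
    moreover have "d + 2 \<le> i \<Longrightarrow> i = d + 2 \<or> d + 1 + 2 \<le> i" for i
      by linarith
    ultimately show "\<forall>i\<ge>d + 2. w i = 0"
      by blast
  qed simp
  moreover have "(\<Sum>i<d + 1 + 2. f i) = (\<Sum>i<d + 2. f i) + f (d + 2)" for f :: "nat \<Rightarrow> int"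
    by simp
  ultimately show ?thesis
    unfolding L_def by auto
qed

lemma case_nat_mem_L_iff:
  assumes H2: "\<forall>h\<in>H. 2 \<le> h" and en: "enough_nonholes (d + 3) H"
  shows "case_nat 0 v \<in> L (d + 1) H \<longleftrightarrow> v \<in> L d ((\<lambda>h. h - 1) ` H)"
proof -
  have "enough_nonholes (Suc (d + 2)) H"
    using en by (simp add: numeral_3_eq_3)
  then have s_Suc: "int (s H (Suc i)) = int (s ((\<lambda>h. h - 1) ` H) i) + 1" if "i < d + 2" for i
    using s_Suc_image_pred[OF H2] that by simp
  have support: "(\<forall>i\<ge>d + 1 + 2. case_nat 0 v i = 0) \<longleftrightarrow> (\<forall>i\<ge>d + 2. v i = 0)"
  proof
    assume A: "\<forall>i\<ge>d + 1 + 2. case_nat 0 v i = 0"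
    show "\<forall>i\<ge>d + 2. v i = 0"
    proof (intro allI impI)
      fix i assume "d + 2 \<le> i"
      then have "d + 1 + 2 \<le> Suc i" by simp
      from A[rule_format, OF this] show "v i = 0" by simp
    qed
  next
    assume B: "\<forall>i\<ge>d + 2. v i = 0"
    show "\<forall>i\<ge>d + 1 + 2. case_nat 0 v i = 0"
    proof (intro allI impI)
      fix i assume "d + 1 + 2 \<le> i"
      then obtain j where "i = Suc j" "d + 2 \<le> j"
        by (cases i) auto
      then show "case_nat 0 v i = 0" using B by simp
    qed
  qed
  have sum: "(\<Sum>i<d + 1 + 2. case_nat 0 v i) = (\<Sum>i<d + 2. v i)"
    by (simp add: sum.lessThan_Suc_shift del: sum.lessThan_Suc)
  have "(\<Sum>i<d + 1 + 2. int (s H i) * case_nat 0 v i) = (\<Sum>i<d + 2. int (s H (Suc i)) * v i)"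
    by (simp add: sum.lessThan_Suc_shift del: sum.lessThan_Suc)
  also have "\<dots> = (\<Sum>i<d + 2. int (s ((\<lambda>h. h - 1) ` H) i) * v i) + (\<Sum>i<d + 2. v i)"
    by (simp add: s_Suc distrib_right sum.distrib)
  finally have weighted: "(\<Sum>i<d + 1 + 2. int (s H i) * case_nat 0 v i)
      = (\<Sum>i<d + 2. int (s ((\<lambda>h. h - 1) ` H) i) * v i) + (\<Sum>i<d + 2. v i)" .
  show ?thesis
    unfolding L_def mem_Collect_eq support sum weighted by auto
qed

lemma L_first_coord_zero_eq_image:
  assumes "\<forall>h\<in>H. 2 \<le> h" and "enough_nonholes (d + 3) H"
  shows "{w \<in> L (d + 1) H. w 0 = 0} = case_nat 0 ` L d ((\<lambda>h. h - 1) ` H)"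
proof (intro set_eqI iffI)
  fix w assume w: "w \<in> {w \<in> L (d + 1) H. w 0 = 0}"
  then have eq: "case_nat 0 (\<lambda>i. w (Suc i)) = w"
    by (auto simp: fun_eq_iff split: nat.split)
  then have "(\<lambda>i. w (Suc i)) \<in> L d ((\<lambda>h. h - 1) ` H)"
    using w case_nat_mem_L_iff[OF assms, of "\<lambda>i. w (Suc i)"] by simp
  with eq show "w \<in> case_nat 0 ` L d ((\<lambda>h. h - 1) ` H)"
    by (rule image_eqI[OF sym])
qed (use case_nat_mem_L_iff[OF assms] in auto)

lemma sum_mult_delta:
  fixes f :: "'a \<Rightarrow> 'b::semiring_0"
  assumes "finite S"
  shows "(\<Sum>i\<in>S. f i * (if i = a then c else 0)) = (if a \<in> S then f a * c else 0)"
proof -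
  have "(\<Sum>i\<in>S. f i * (if i = a then c else 0)) = (\<Sum>i\<in>S. if i = a then f a * c else 0)"
    by (rule sum.cong) auto
  then show ?thesis
    using assms by simp
qed

lemma three_term_mem_L:
  assumes "p < d + 2" "q < d + 2" "r < d + 2" "p \<noteq> q" "q \<noteq> r" "p \<noteq> r"
  shows "(\<lambda>i. (if i = p then int (s H r) - int (s H q) else 0)
            + (if i = q then int (s H p) - int (s H r) else 0)
            + (if i = r then int (s H q) - int (s H p) else 0)) \<in> L d H"
  using assms by (simp add: L_def sum.distrib distrib_left sum_mult_delta algebra_simps
      del: sum.lessThan_Suc)


section \<open>Norms and minimal vectors\<close>

lemma sqnorm_Suc_shift: "sqnorm (Suc k) w = (w 0)^2 + sqnorm k (\<lambda>i. w (Suc i))"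
  unfolding sqnorm_def by (simp add: sum.lessThan_Suc_shift del: sum.lessThan_Suc)

lemma even_sqnorm:
  assumes "(\<Sum>i<n. w i) = 0"
  shows "even (sqnorm n w)"
proof -
  have "sqnorm n w = (\<Sum>i<n. w i * (w i - 1)) + (\<Sum>i<n. w i)"
    unfolding sqnorm_def by (simp add: power2_eq_square algebra_simps flip: sum.distrib)
  moreover have "even (\<Sum>i<n. w i * (w i - 1))"
    by (intro dvd_sum) auto
  ultimately show ?thesis
    using assms by simp
qed

lemma sum_zero_sum_squares_eq_2:
  fixes w :: "'a \<Rightarrow> int"
  assumes fin: "finite I" and sum0: "(\<Sum>i\<in>I. w i) = 0" and sq: "(\<Sum>i\<in>I. (w i)^2) = 2"
  shows "\<exists>i\<in>I. \<exists>j\<in>I. i \<noteq> j \<and> w i \<noteq> 0 \<and> w j = - w i \<and> (\<forall>k\<in>I - {i, j}. w k = 0)"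
proof -
  obtain i where i: "i \<in> I" "w i \<noteq> 0"
  proof -
    have "\<not> (\<forall>i\<in>I. w i = 0)"
    proof
      assume "\<forall>i\<in>I. w i = 0"
      then have "(\<Sum>i\<in>I. (w i)^2) = 0"
        by (intro sum.neutral) simp
      with sq show False by simp
    qed
    with that show ?thesis by blast
  qed
  obtain j where j: "j \<in> I" "j \<noteq> i" "w j \<noteq> 0"
  proof -
    have "\<not> (\<forall>j\<in>I - {i}. w j = 0)"
    proof
      assume "\<forall>j\<in>I - {i}. w j = 0"
      then have "(\<Sum>j\<in>I. w j) = w i"
        using sum.remove[OF fin i(1), of w] sum.neutral[of "I - {i}" w] by simp
      with sum0 i(2) show False by simp
    qed
    with that show ?thesis by blast
  qed
  have ij: "{i, j} \<subseteq> I"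
    using i j by simp
  have "(\<Sum>k\<in>I - {i, j}. (w k)^2) = 0"
  proof -
    have "(\<Sum>k\<in>I. (w k)^2) = (\<Sum>k\<in>I - {i, j}. (w k)^2) + (w i)^2 + (w j)^2"
      using sum.subset_diff[OF ij fin, of "\<lambda>k. (w k)^2"] j(2) by simp
    moreover have "1 \<le> (w i)^2" "1 \<le> (w j)^2"
      using i(2) j(3) by (simp_all add: int_one_le_iff_zero_less)
    moreover have "0 \<le> (\<Sum>k\<in>I - {i, j}. (w k)^2)"
      by (simp add: sum_nonneg)
    ultimately show ?thesis
      using sq by linarith
  qed
  then have rest: "w k = 0" if "k \<in> I - {i, j}" for k
    using that fin by (simp add: sum_nonneg_eq_0_iff)
  have "(\<Sum>k\<in>I. w k) = (\<Sum>k\<in>{i, j}. w k)"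
    by (rule sum.mono_neutral_right[OF fin ij]) (simp add: rest)
  with sum0 j(2) have "w j = - w i"
    by simp
  with i j rest show ?thesis
    by (intro bexI[of _ i] bexI[of _ j]) auto
qed

lemma L_sqnorm_neq_2:
  assumes w: "w \<in> L n H" and en: "enough_nonholes (n + 2) H"
  shows "sqnorm (n + 2) w \<noteq> 2"
proof
  assume "sqnorm (n + 2) w = 2"
  then have sq: "(\<Sum>i\<in>{..<n + 2}. (w i)^2) = 2"
    by (simp add: sqnorm_def)
  have sum0: "(\<Sum>i\<in>{..<n + 2}. w i) = 0" and weighted: "(\<Sum>i<n + 2. int (s H i) * w i) = 0"
    using w unfolding L_def mem_Collect_eq by blast+
  obtain i j where ij: "i \<in> {..<n + 2}" "j \<in> {..<n + 2}" "i \<noteq> j" "w i \<noteq> 0" "w j = - w i"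
    and rest: "\<forall>k\<in>{..<n + 2} - {i, j}. w k = 0"
    using sum_zero_sum_squares_eq_2[OF finite_lessThan sum0 sq] by blast
  have "(\<Sum>k<n + 2. int (s H k) * w k) = (\<Sum>k\<in>{i, j}. int (s H k) * w k)"
    using ij by (intro sum.mono_neutral_right) (auto simp: rest)
  with weighted ij have "int (s H i) * w i = int (s H j) * w i"
    by simp
  with ij(4) have "s H i = s H j"
    by simp
  moreover have "s H i \<noteq> s H j"
    using ij(1-3) s_strict_mono[OF en, of i j] s_strict_mono[OF en, of j i]
    by (auto simp: nat_neq_iff)
  ultimately show False
    by simp
qed

lemma L_sqnorm_ge_4:
  assumes w: "w \<in> L n H" "w \<noteq> (\<lambda>_. 0)" and en: "enough_nonholes (n + 2) H"
  shows "4 \<le> sqnorm (n + 2) w"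
proof -
  have support: "\<forall>i\<ge>n + 2. w i = 0" and sum0: "(\<Sum>i<n + 2. w i) = 0"
    using w(1) unfolding L_def mem_Collect_eq by blast+
  obtain i where "w i \<noteq> 0"
    using w(2) by auto
  moreover from this support have "i < n + 2"
    using not_le by blast
  ultimately have "0 < sqnorm (n + 2) w"
    unfolding sqnorm_def by (intro sum_pos2[of _ i]) auto
  moreover obtain t where t: "sqnorm (n + 2) w = 2 * t"
    using even_sqnorm[OF sum0] ..
  moreover have "sqnorm (n + 2) w \<noteq> 2"
    using L_sqnorm_neq_2[OF w(1) en] .
  ultimately have "1 \<le> t" "1 \<noteq> t"
    by simp_all
  then have "1 < t"
    by (rule le_neq_trans)
  with t show ?thesis
    by linarith
qed

lemma min_vecs_sqnorm:
  assumes "has_minimum k \<Lambda> m" "v \<in> min_vecs k \<Lambda>"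
  shows "sqnorm k v = m"
proof -
  obtain u where "u \<in> \<Lambda>" "u \<noteq> (\<lambda>_. 0)" "sqnorm k u = m"
    using assms(1) unfolding has_minimum_def by auto
  then show ?thesis
    using assms unfolding has_minimum_def min_vecs_def by force
qed

lemma image_min_vecs_subset:
  assumes "has_minimum k' \<Lambda>' m"
    and "\<And>w. w \<in> \<Lambda> \<Longrightarrow> w \<noteq> (\<lambda>_. 0) \<Longrightarrow> m \<le> sqnorm k w"
    and "\<And>v. v \<in> \<Lambda>' \<Longrightarrow> f v \<in> \<Lambda> \<and> sqnorm k (f v) = sqnorm k' v"
    and "\<And>v. v \<noteq> (\<lambda>_. 0) \<Longrightarrow> f v \<noteq> (\<lambda>_. 0)"
  shows "f ` min_vecs k' \<Lambda>' \<subseteq> min_vecs k \<Lambda>"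
proof
  fix u assume "u \<in> f ` min_vecs k' \<Lambda>'"
  then obtain v where v: "v \<in> min_vecs k' \<Lambda>'" and u: "u = f v"
    by blast
  then have "v \<in> \<Lambda>'" "v \<noteq> (\<lambda>_. 0)"
    by (simp_all add: min_vecs_def)
  then have "u \<in> \<Lambda>" "u \<noteq> (\<lambda>_. 0)" "sqnorm k u = m"
    using assms(3,4) min_vecs_sqnorm[OF assms(1) v] by (simp_all add: u)
  with assms(2) show "u \<in> min_vecs k \<Lambda>"
    by (simp add: min_vecs_def)
qed


section \<open>Real spans and symmetric tensors\<close>

instantiation "fun" :: (type, real_vector) real_vector
begin

definition scaleR_fun :: "real \<Rightarrow> ('a \<Rightarrow> 'b) \<Rightarrow> 'a \<Rightarrow> 'b"
  where "scaleR_fun c f = (\<lambda>x. c *\<^sub>R f x)"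

instance
  by standard (simp_all add: scaleR_fun_def fun_eq_iff scaleR_add_right scaleR_add_left)

end

lemma scaleR_fun_apply [simp]: "(c *\<^sub>R f) x = c *\<^sub>R f x"
  by (simp add: scaleR_fun_def)

lemma sum_fun_apply [simp]: "(\<Sum>v\<in>S. f v) x = (\<Sum>v\<in>S. f v x)"
  by (induction S rule: infinite_finite_induct) auto

lemma span_image_explicit:
  "span (f ` A) = {y. \<exists>S c. finite S \<and> S \<subseteq> A \<and> y = (\<Sum>v\<in>S. c v *\<^sub>R f v)}"
proof (intro set_eqI iffI)
  fix y assume "y \<in> span (f ` A)"
  then obtain T r where T: "finite T" "T \<subseteq> f ` A" and y: "y = (\<Sum>a\<in>T. r a *\<^sub>R a)"
    unfolding span_explicit by blast
  then obtain S where S: "S \<subseteq> A" "inj_on f S" "T = f ` S"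
    by (auto simp: subset_image_inj)
  have "finite S" "y = (\<Sum>v\<in>S. r (f v) *\<^sub>R f v)"
    using S T y by (simp_all add: finite_image_iff sum.reindex)
  with \<open>S \<subseteq> A\<close> show "y \<in> {y. \<exists>S c. finite S \<and> S \<subseteq> A \<and> y = (\<Sum>v\<in>S. c v *\<^sub>R f v)}"
    by (intro CollectI exI[of _ S] exI[of _ "\<lambda>v. r (f v)"]) simp
next
  fix y assume "y \<in> {y. \<exists>S c. finite S \<and> S \<subseteq> A \<and> y = (\<Sum>v\<in>S. c v *\<^sub>R f v)}"
  then obtain S c where "S \<subseteq> A" and y: "y = (\<Sum>v\<in>S. c v *\<^sub>R f v)"
    by auto
  then have "c v *\<^sub>R f v \<in> span (f ` A)" if "v \<in> S" for v
    using that by (blast intro: span_scale span_base)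
  then show "y \<in> span (f ` A)"
    unfolding y by (rule span_sum)
qed

definition vec_of :: "(nat \<Rightarrow> int) \<Rightarrow> nat \<Rightarrow> real"
  where "vec_of v = (\<lambda>i. real_of_int (v i))"

definition outer :: "('a \<Rightarrow> real) \<Rightarrow> ('b \<Rightarrow> real) \<Rightarrow> 'a \<Rightarrow> 'b \<Rightarrow> real"
  where "outer p q = (\<lambda>i j. p i * q j)"

lemma outer_apply [simp]: "outer p q i = p i *\<^sub>R q"
  by (simp add: outer_def fun_eq_iff)

definition tensor_sq :: "(nat \<Rightarrow> int) \<Rightarrow> nat \<Rightarrow> nat \<Rightarrow> real"
  where "tensor_sq v = outer (vec_of v) (vec_of v)"

lemma real_span_eq_span: "real_span \<Lambda> = span (vec_of ` \<Lambda>)"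
proof -
  have "(\<Sum>v\<in>S. c v *\<^sub>R vec_of v) = (\<lambda>i. \<Sum>v\<in>S. c v * real_of_int (v i))" for S c
    by (simp add: fun_eq_iff vec_of_def)
  then show ?thesis
    by (simp add: span_image_explicit real_span_def)
qed

lemma tensor_span_eq_span: "tensor_span S = span (tensor_sq ` S)"
proof -
  have "(\<Sum>v\<in>T. c v *\<^sub>R tensor_sq v) = (\<lambda>i j. \<Sum>v\<in>T. c v * real_of_int (v i) * real_of_int (v j))"
    for T c
    by (simp add: fun_eq_iff tensor_sq_def vec_of_def mult.assoc)
  then show ?thesis
    by (simp add: span_image_explicit tensor_span_def)
qed

lemma subspace_sym_tensors: "subspace (sym_tensors \<Lambda>)"
  unfolding subspace_def
proof (intro conjI ballI allI)
  show "0 \<in> sym_tensors \<Lambda>"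
    by (simp add: sym_tensors_def real_span_eq_span span_zero)
  show "M + N \<in> sym_tensors \<Lambda>" if "M \<in> sym_tensors \<Lambda>" "N \<in> sym_tensors \<Lambda>" for M N
    using that by (simp add: sym_tensors_def real_span_eq_span span_add)
  show "c *\<^sub>R M \<in> sym_tensors \<Lambda>" if "M \<in> sym_tensors \<Lambda>" for c M
    using that by (simp add: sym_tensors_def real_span_eq_span span_scale)
qed

lemma outer_add_transpose_mem_sym_tensors:
  assumes "p \<in> real_span \<Lambda>" "q \<in> real_span \<Lambda>"
  shows "outer p q + outer q p \<in> sym_tensors \<Lambda>"
proof -
  have "(outer p q + outer q p) i \<in> real_span \<Lambda>" for i
    using assms by (simp add: real_span_eq_span span_add span_scale)
  moreover have "(outer p q + outer q p) i j = (outer p q + outer q p) j i" for i j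
    by (simp add: outer_def)
  ultimately show ?thesis
    unfolding sym_tensors_def by blast
qed

lemma outer_self_mem_sym_tensors:
  assumes "p \<in> real_span \<Lambda>"
  shows "outer p p \<in> sym_tensors \<Lambda>"
proof -
  have "outer p p i \<in> real_span \<Lambda>" for i
    using assms by (simp add: real_span_eq_span span_scale)
  moreover have "outer p p i j = outer p p j i" for i j
    by (simp add: outer_def mult.commute)
  ultimately show ?thesis
    unfolding sym_tensors_def by blast
qed

lemma tensor_span_subset_sym_tensors:
  assumes "S \<subseteq> \<Lambda>"
  shows "tensor_span S \<subseteq> sym_tensors \<Lambda>"
  unfolding tensor_span_eq_span
proof (rule span_minimal[OF _ subspace_sym_tensors], rule image_subsetI)
  fix v assume "v \<in> S"
  then have "vec_of v \<in> real_span \<Lambda>"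
    using assms by (auto simp: real_span_eq_span intro: span_base)
  then show "tensor_sq v \<in> sym_tensors \<Lambda>"
    unfolding tensor_sq_def by (rule outer_self_mem_sym_tensors)
qed

lemma tensor_span_mono: "S \<subseteq> T \<Longrightarrow> tensor_span S \<subseteq> tensor_span T"
  by (simp add: tensor_span_eq_span image_mono span_mono)

lemma perfect_iff_sym_tensors_subset:
  "perfect k \<Lambda> \<longleftrightarrow> sym_tensors \<Lambda> \<subseteq> tensor_span (min_vecs k \<Lambda>)"
proof -
  have "tensor_span (min_vecs k \<Lambda>) \<subseteq> sym_tensors \<Lambda>"
    by (rule tensor_span_subset_sym_tensors) (auto simp: min_vecs_def)
  then show ?thesis
    unfolding perfect_def by blast
qed

lemma span_vec_of_coord_zero:
  assumes closed: "\<And>v c. v \<in> \<Lambda> \<Longrightarrow> (\<lambda>i. v i - c * x i) \<in> \<Lambda>" and "x k = 1"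
    and y: "y \<in> span (vec_of ` \<Lambda>)" and "y k = 0"
  shows "y \<in> span (vec_of ` {w \<in> \<Lambda>. w k = 0})"
proof -
  define P where "P y = y - y k *\<^sub>R vec_of x" for y :: "nat \<Rightarrow> real"
  have "linear P"
    by (rule linearI) (simp_all add: P_def fun_eq_iff algebra_simps)
  have P_vec_of: "P (vec_of v) \<in> vec_of ` {w \<in> \<Lambda>. w k = 0}" if "v \<in> \<Lambda>" for v
  proof (rule image_eqI)
    show "P (vec_of v) = vec_of (\<lambda>i. v i - v k * x i)"
      by (simp add: P_def vec_of_def fun_eq_iff)
    show "(\<lambda>i. v i - v k * x i) \<in> {w \<in> \<Lambda>. w k = 0}"
      using closed[OF that] \<open>x k = 1\<close> by simp
  qed
  have "P y \<in> P ` span (vec_of ` \<Lambda>)"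
    using y by (rule imageI)
  also have "P ` span (vec_of ` \<Lambda>) = span (P ` vec_of ` \<Lambda>)"
    by (rule span_linear_image[OF \<open>linear P\<close>, symmetric])
  also have "\<dots> \<subseteq> span (vec_of ` {w \<in> \<Lambda>. w k = 0})"
    using P_vec_of by (intro span_mono) blast
  finally show ?thesis
    using \<open>y k = 0\<close> by (simp add: P_def)
qed

lemma sym_tensors_coord_zero:
  assumes closed: "\<And>v c. v \<in> \<Lambda> \<Longrightarrow> (\<lambda>i. v i - c * x i) \<in> \<Lambda>" and "x k = 1"
    and M: "M \<in> sym_tensors \<Lambda>" and "\<And>i. M i k = 0"
  shows "M \<in> sym_tensors {w \<in> \<Lambda>. w k = 0}"
proof -
  have "M i \<in> span (vec_of ` \<Lambda>)" for i
    using M by (simp add: sym_tensors_def real_span_eq_span)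
  then have "M i \<in> span (vec_of ` {w \<in> \<Lambda>. w k = 0})" for i
    using span_vec_of_coord_zero[OF closed \<open>x k = 1\<close>] \<open>M i k = 0\<close> by blast
  then show ?thesis
    using M by (simp add: sym_tensors_def real_span_eq_span)
qed

definition shift_tensor :: "(nat \<Rightarrow> nat \<Rightarrow> real) \<Rightarrow> nat \<Rightarrow> nat \<Rightarrow> real"
  where "shift_tensor N = case_nat 0 (case_nat 0 \<circ> N)"

lemma linear_case_nat_zero: "linear (case_nat 0 :: (nat \<Rightarrow> 'a::real_vector) \<Rightarrow> nat \<Rightarrow> 'a)"
  by (rule linearI) (simp_all add: fun_eq_iff split: nat.split)

lemma linear_shift_tensor: "linear shift_tensor"
  by (rule linearI) (simp_all add: shift_tensor_def fun_eq_iff split: nat.split)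

lemma vec_of_case_nat_zero: "vec_of (case_nat 0 v) = case_nat 0 (vec_of v)"
  by (simp add: vec_of_def fun_eq_iff split: nat.split)

lemma tensor_sq_case_nat_zero: "tensor_sq (case_nat 0 v) = shift_tensor (tensor_sq v)"
  by (simp add: tensor_sq_def shift_tensor_def vec_of_def outer_def fun_eq_iff split: nat.split)

lemma real_span_case_nat_image: "real_span (case_nat 0 ` \<Lambda>) = case_nat 0 ` real_span \<Lambda>"
proof -
  have "vec_of ` case_nat 0 ` \<Lambda> = case_nat 0 ` vec_of ` \<Lambda>"
    by (simp add: image_image vec_of_case_nat_zero)
  then show ?thesis
    unfolding real_span_eq_span by (simp add: span_linear_image[OF linear_case_nat_zero])
qed

lemma tensor_span_case_nat_image: "tensor_span (case_nat 0 ` S) = shift_tensor ` tensor_span S"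
proof -
  have "tensor_sq ` case_nat 0 ` S = shift_tensor ` tensor_sq ` S"
    by (simp add: image_image tensor_sq_case_nat_zero)
  then show ?thesis
    unfolding tensor_span_eq_span by (simp add: span_linear_image[OF linear_shift_tensor])
qed

lemma sym_tensors_case_nat_image: "sym_tensors (case_nat 0 ` \<Lambda>) \<subseteq> shift_tensor ` sym_tensors \<Lambda>"
proof
  fix M assume M: "M \<in> sym_tensors (case_nat 0 ` \<Lambda>)"
  then have sym: "M i j = M j i" for i j
    by (simp add: sym_tensors_def)
  have "M i \<in> case_nat 0 ` real_span \<Lambda>" for i
    using M by (simp add: sym_tensors_def real_span_case_nat_image)
  then have "\<forall>i. \<exists>y. y \<in> real_span \<Lambda> \<and> M i = case_nat 0 y"
    by blast
  then obtain N where N: "N i \<in> real_span \<Lambda>" "M i = case_nat 0 (N i)" for i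
    using choice[of "\<lambda>i y. y \<in> real_span \<Lambda> \<and> M i = case_nat 0 y"] by blast
  have "M i j = shift_tensor (N \<circ> Suc) i j" for i j
  proof (cases i)
    case 0
    then show ?thesis
      using sym[of 0 j] N(2)[of j] by (simp add: shift_tensor_def)
  next
    case (Suc i')
    then show ?thesis
      using N(2)[of i] by (simp add: shift_tensor_def)
  qed
  then have "M = shift_tensor (N \<circ> Suc)"
    by (intro ext)
  moreover have "(N \<circ> Suc) i j = (N \<circ> Suc) j i" for i j
    using sym[of "Suc i" "Suc j"] N(2)[of "Suc i"] N(2)[of "Suc j"] by simp
  with N(1) have "N \<circ> Suc \<in> sym_tensors \<Lambda>"
    by (simp add: sym_tensors_def)
  ultimately show "M \<in> shift_tensor ` sym_tensors \<Lambda>"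
    by blast
qed

lemma sym_tensors_subset_if_coord_hyperplanes:
  assumes closed: "\<And>v c. v \<in> \<Lambda> \<Longrightarrow> (\<lambda>i. v i - c * x i) \<in> \<Lambda>"
    and x: "x \<in> \<Lambda>" "x k = 1" "x l = 1" and z: "z \<in> \<Lambda>" "z k = 0" "z l \<noteq> 0"
    and T: "subspace T" "sym_tensors {w \<in> \<Lambda>. w l = 0} \<subseteq> T"
      "sym_tensors {w \<in> \<Lambda>. w k = 0} \<subseteq> T" "tensor_sq x \<in> T"
  shows "sym_tensors \<Lambda> \<subseteq> T"
proof
  fix M assume M: "M \<in> sym_tensors \<Lambda>"
  then have sym: "M i j = M j i" and row: "M i \<in> real_span \<Lambda>" for i j
    by (simp_all add: sym_tensors_def)
  define a where "a = (1 / real_of_int (z l)) *\<^sub>R vec_of z"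
  define b where "b = vec_of x - a"
  have "vec_of x \<in> real_span \<Lambda>" "vec_of z \<in> real_span \<Lambda>"
    using x z by (simp_all add: real_span_eq_span span_base)
  then have ab: "a \<in> real_span \<Lambda>" "b \<in> real_span \<Lambda>"
    unfolding a_def b_def real_span_eq_span by (simp_all add: span_scale span_diff)
  have a_kl: "a k = 0" "a l = 1" and b_kl: "b k = 1" "b l = 0"
    using x z by (simp_all add: a_def b_def vec_of_def)
  define r where "r = M l"
  define c where "c = M l k"
  define m where "m = M l l"
  define A1 where "A1 = M - (outer a r + outer r a) + m *\<^sub>R outer a a - c *\<^sub>R outer b b"
  define A2 where "A2 = (outer a (r - c *\<^sub>R b) + outer (r - c *\<^sub>R b) a) - (m + c) *\<^sub>R outer a a"
  have "vec_of x = a + b"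
    by (simp add: b_def)
  then have decomp: "M = A1 + A2 + c *\<^sub>R tensor_sq x"
    by (simp add: A1_def A2_def tensor_sq_def outer_def fun_eq_iff algebra_simps)
  have S: "subspace (sym_tensors \<Lambda>)"
    by (rule subspace_sym_tensors)
  have r: "r \<in> real_span \<Lambda>" and u: "r - c *\<^sub>R b \<in> real_span \<Lambda>"
    using row ab(2) by (simp_all add: r_def real_span_eq_span span_diff span_scale)
  have A1: "A1 \<in> sym_tensors {w \<in> \<Lambda>. w l = 0}"
  proof (rule sym_tensors_coord_zero[OF closed \<open>x l = 1\<close>])
    show "A1 \<in> sym_tensors \<Lambda>"
      unfolding A1_def using M ab r
      by (intro subspace_diff[OF S] subspace_add[OF S] subspace_scale[OF S]
          outer_add_transpose_mem_sym_tensors outer_self_mem_sym_tensors)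
    show "A1 i l = 0" for i
      using sym[of i l] by (simp add: A1_def r_def m_def a_kl b_kl)
  qed
  have A2: "A2 \<in> sym_tensors {w \<in> \<Lambda>. w k = 0}"
  proof (rule sym_tensors_coord_zero[OF closed \<open>x k = 1\<close>])
    show "A2 \<in> sym_tensors \<Lambda>"
      unfolding A2_def using ab u
      by (intro subspace_diff[OF S] subspace_scale[OF S]
          outer_add_transpose_mem_sym_tensors outer_self_mem_sym_tensors)
    show "A2 i k = 0" for i
      by (simp add: A2_def r_def c_def a_kl b_kl)
  qed
  have "A1 \<in> T" "A2 \<in> T"
    using A1 A2 T(2,3) by blast+
  then show "M \<in> T"
    unfolding decomp using T(1,4) by (intro subspace_add subspace_scale)
qed


section \<open>The lattice L (d + 1) H\<close>

lemma obtain_L_Suc_first_zero_last_nonzero: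
  assumes "d \<ge> 1" and "enough_nonholes (d + 3) H"
  obtains z where "z \<in> L (d + 1) H" "z 0 = 0" "z (d + 2) \<noteq> 0"
proof
  let ?z = "\<lambda>i. (if i = 1 then int (s H (d + 2)) - int (s H 2) else 0)
              + (if i = 2 then int (s H 1) - int (s H (d + 2)) else 0)
              + (if i = d + 2 then int (s H 2) - int (s H 1) else 0)"
  show "?z \<in> L (d + 1) H"
    using assms(1) three_term_mem_L[of 1 "d + 1" 2 "d + 2" H] by simp
  show "?z 0 = 0"
    by simp
  show "?z (d + 2) \<noteq> 0"
    using assms s_strict_mono[OF assms(2), of 1 2] by simp
qed

lemma L_Suc_sqnorm_ge_4:
  assumes "enough_nonholes (d + 3) H" "w \<in> L (d + 1) H" "w \<noteq> (\<lambda>_. 0)"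
  shows "4 \<le> sqnorm (d + 3) w"
  using L_sqnorm_ge_4[of w "d + 1" H] assms by (simp add: numeral_3_eq_3)

lemma sym_tensors_L_last_coord_zero:
  assumes en: "enough_nonholes (d + 3) H"
    and "perfect (d + 2) (L d H)" "has_minimum (d + 2) (L d H) 4"
  shows "sym_tensors {w \<in> L (d + 1) H. w (d + 2) = 0}
           \<subseteq> tensor_span (min_vecs (d + 3) (L (d + 1) H))"
proof -
  have "v \<in> L (d + 1) H \<and> sqnorm (d + 3) v = sqnorm (d + 2) v" if "v \<in> L d H" for v
    using that L_eq_last_coord_zero[of d H] by (auto simp: sqnorm_def numeral_3_eq_3)
  then have "min_vecs (d + 2) (L d H) \<subseteq> min_vecs (d + 3) (L (d + 1) H)"
    using image_min_vecs_subset[OF assms(3) L_Suc_sqnorm_ge_4[OF en], where f = "\<lambda>v. v"] by simp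
  then have "tensor_span (min_vecs (d + 2) (L d H)) \<subseteq> tensor_span (min_vecs (d + 3) (L (d + 1) H))"
    by (rule tensor_span_mono)
  with assms(2) show ?thesis
    unfolding L_eq_last_coord_zero[symmetric] perfect_def by simp
qed

lemma sym_tensors_L_first_coord_zero:
  assumes H2: "\<forall>h\<in>H. 2 \<le> h" and en: "enough_nonholes (d + 3) H"
    and "perfect (d + 2) (L d ((\<lambda>h. h - 1) ` H))" "has_minimum (d + 2) (L d ((\<lambda>h. h - 1) ` H)) 4"
  shows "sym_tensors {w \<in> L (d + 1) H. w 0 = 0} \<subseteq> tensor_span (min_vecs (d + 3) (L (d + 1) H))"
proof -
  let ?L' = "L d ((\<lambda>h. h - 1) ` H)"
  have d3: "d + 3 = Suc (d + 2)"
    by simp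
  have "sqnorm (d + 3) (case_nat 0 v) = sqnorm (d + 2) v" for v
    unfolding d3 sqnorm_Suc_shift[of "d + 2"] by simp
  then have "case_nat 0 v \<in> L (d + 1) H \<and> sqnorm (d + 3) (case_nat 0 v) = sqnorm (d + 2) v"
    if "v \<in> ?L'" for v
    using that case_nat_mem_L_iff[OF H2 en] by simp
  moreover have "case_nat 0 v \<noteq> (\<lambda>_. 0)" if "v \<noteq> (\<lambda>_. 0)" for v :: "nat \<Rightarrow> int"
    using that by (auto simp: fun_eq_iff) (metis nat.case(2))
  ultimately have "case_nat 0 ` min_vecs (d + 2) ?L' \<subseteq> min_vecs (d + 3) (L (d + 1) H)"
    using image_min_vecs_subset[OF assms(4) L_Suc_sqnorm_ge_4[OF en], where f = "case_nat 0"]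
    by blast
  then have "tensor_span (case_nat 0 ` min_vecs (d + 2) ?L') \<subseteq> tensor_span (min_vecs (d + 3) (L (d + 1) H))"
    by (rule tensor_span_mono)
  moreover have "sym_tensors (case_nat 0 ` ?L') \<subseteq> tensor_span (case_nat 0 ` min_vecs (d + 2) ?L')"
    using sym_tensors_case_nat_image[of ?L'] assms(3) by (simp add: perfect_def tensor_span_case_nat_image)
  ultimately show ?thesis
    unfolding L_first_coord_zero_eq_image[OF H2 en] by blast
qed

theorem proposition4p1:
  fixes d :: nat and H :: "nat set"
  assumes "d \<ge> 1"
    and "0 \<notin> H"
    and "H \<noteq> {}" and "\<forall>h\<in>H. 2 \<le> h"
    and "enough_nonholes (d + 3) H"
    and "perfect (d + 2) (L d H)" and "has_minimum (d + 2) (L d H) 4"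
    and "perfect (d + 2) (L d ((\<lambda>h. h - 1) ` H))"
    and "has_minimum (d + 2) (L d ((\<lambda>h. h - 1) ` H)) 4"
    and "\<exists>x\<in>L (d + 1) H. sqnorm (d + 3) x = 4 \<and> x 0 = 1 \<and> x (d + 2) = 1"
  shows "perfect (d + 3) (L (d + 1) H)"
proof -
  let ?M = "min_vecs (d + 3) (L (d + 1) H)"
  obtain x where x: "x \<in> L (d + 1) H" "sqnorm (d + 3) x = 4" "x 0 = 1" "x (d + 2) = 1"
    using assms(10) by blast
  then have "x \<in> ?M"
    using L_Suc_sqnorm_ge_4[OF assms(5)] by (auto simp: min_vecs_def)
  obtain z where z: "z \<in> L (d + 1) H" "z 0 = 0" "z (d + 2) \<noteq> 0"
    using obtain_L_Suc_first_zero_last_nonzero[OF assms(1,5)] .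
  have "sym_tensors (L (d + 1) H) \<subseteq> tensor_span ?M"
  proof (rule sym_tensors_subset_if_coord_hyperplanes[OF _ x(1,3,4) z])
    show "(\<lambda>i. v i - c * x i) \<in> L (d + 1) H" if "v \<in> L (d + 1) H" for v c
      using that x(1) by (rule L_diff_mult_mem)
    show "subspace (tensor_span ?M)" "tensor_sq x \<in> tensor_span ?M"
      using \<open>x \<in> ?M\<close> by (simp_all add: tensor_span_eq_span span_base)
    show "sym_tensors {w \<in> L (d + 1) H. w (d + 2) = 0} \<subseteq> tensor_span ?M"
      using sym_tensors_L_last_coord_zero[OF assms(5-7)] .
    show "sym_tensors {w \<in> L (d + 1) H. w 0 = 0} \<subseteq> tensor_span ?M"
      using sym_tensors_L_first_coord_zero[OF assms(4,5,8,9)] .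
  qed
  then show ?thesis
    by (simp add: perfect_iff_sym_tensors_subset)
qed

end
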